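(* Let $P$ be a program and $G$ a goal. If every SLD derivation of $G$ in $P$ is finite, independently of the selection rule used (i.e. for arbitrary choices of the selected atom at each step), then every RSLD derivation of $G$ in $P$ is finite.
   Context: Goals are finite lists of atoms; a clause is $h\leftarrow B$ with $h$ an atom and $B$ a goal; a program is a finite set of clauses. For goals regarded as lists, $N\subseteq_L G$ means $N$ is a subsequence of $G$, and $G-N$ denotes the list of deleted atoms. $var(E)$ is the set of variables of $E$. If $G=a_1,\dots,a_k$, $c=(h\leftarrow B)$, $\xi$ a renaming and $\theta$ an idempotent relevant mgu of $h\xi$ and some $a_i$, then $(a_1,\dots,a_{i-1},B\xi,a_{i+1},\dots,a_k)\theta$ is a resolvent of $G$ and $c$. An SLD derivation of $G_0$ in $P$ is a finite or infinite sequence $G_0\xrightarrow{c_0\xi_0,\theta_0}G_1\xrightarrow{c_1\xi_1,\theta_1}\cdots$ of such steps with $c_j\in P$ and $var(c_j\xi_j)\cap(var(G_0)\cup var(c_0\xi_0)\cup\dots\cup var(c_{j-1}\xi_{j-1}))=\emptyset$. Reduced goal: $N$ is a reduced goal of $G$ by the substitution $\tau$ up to the variable set $X$, written $G>>^{\tau}N$, if (i) $N\subseteq_L G$, (ii) for every atom $b$ of $G-N$, $b\tau$ occurs in $N$, (iii) $x\tau=x$ for every $x\in var(N)\cup X$. RSLD derivation of $G_0$ in $P$: a finite or infinite sequence $G_0>>^{\alpha_0}N_0\xrightarrow{c_0\xi_0,\theta_0}G_1>>^{\alpha_1}N_1\xrightarrow{c_1\xi_1,\theta_1}G_2\cdots$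 where each $N_j\xrightarrow{c_j\xi_j,\theta_j}G_{j+1}$ is an SLD resolution step with $c_j\in P$, $var(c_j\xi_j)\cap(var(G_0)\cup var(c_0\xi_0)\cup\dots\cup var(c_{j-1}\xi_{j-1}))=\emptyset$, and $G_j>>^{\alpha_j}N_j$ up to $var(G_0\theta_0\cdots\theta_{j-1})$. *)

theory Defs
  imports Main
begin

datatype ('f, 'v) trm = Var 'v | Fn 'f "('f, 'v) trm list"

type_synonym ('p, 'f, 'v) atom = "'p \<times> ('f, 'v) trm list"
type_synonym ('p, 'f, 'v) goal = "('p, 'f, 'v) atom list"
type_synonym ('p, 'f, 'v) clause = "('p, 'f, 'v) atom \<times> ('p, 'f, 'v) goal"

type_synonym ('f, 'v) subst = "'v \<Rightarrow> ('f, 'v) trm"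

fun vars_t :: "('f, 'v) trm \<Rightarrow> 'v set" where
  "vars_t (Var x) = {x}"
| "vars_t (Fn f ts) = (\<Union>t\<in>set ts. vars_t t)"

definition vars_a :: "('p, 'f, 'v) atom \<Rightarrow> 'v set" where
  "vars_a a = (\<Union>t\<in>set (snd a). vars_t t)"

definition vars_g :: "('p, 'f, 'v) goal \<Rightarrow> 'v set" where
  "vars_g G = (\<Union>a\<in>set G. vars_a a)"

definition vars_c :: "('p, 'f, 'v) clause \<Rightarrow> 'v set" where
  "vars_c c = vars_a (fst c) \<union> vars_g (snd c)"

fun subst_t :: "('f, 'v) subst \<Rightarrow> ('f, 'v) trm \<Rightarrow> ('f, 'v) trm" where
  "subst_t \<sigma> (Var x) = \<sigma> x"
| "subst_t \<sigma> (Fn f ts) = Fn f (map (subst_t \<sigma>) ts)"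

definition subst_a :: "('f, 'v) subst \<Rightarrow> ('p, 'f, 'v) atom \<Rightarrow> ('p, 'f, 'v) atom" where
  "subst_a \<sigma> a = (fst a, map (subst_t \<sigma>) (snd a))"

definition subst_g :: "('f, 'v) subst \<Rightarrow> ('p, 'f, 'v) goal \<Rightarrow> ('p, 'f, 'v) goal" where
  "subst_g \<sigma> G = map (subst_a \<sigma>) G"

definition subst_c :: "('f, 'v) subst \<Rightarrow> ('p, 'f, 'v) clause \<Rightarrow> ('p, 'f, 'v) clause" where
  "subst_c \<sigma> c = (subst_a \<sigma> (fst c), subst_g \<sigma> (snd c))"

text \<open>Composition: apply sigma first, then tau (E (sigma tau) = (E sigma) tau).\<close>
definition comp_s :: "('f, 'v) subst \<Rightarrow> ('f, 'v) subst \<Rightarrow> ('f, 'v) subst" where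
  "comp_s \<sigma> \<tau> = (\<lambda>x. subst_t \<tau> (\<sigma> x))"

definition sdom :: "('f, 'v) subst \<Rightarrow> 'v set" where
  "sdom \<sigma> = {x. \<sigma> x \<noteq> Var x}"

definition srange_vars :: "('f, 'v) subst \<Rightarrow> 'v set" where
  "srange_vars \<sigma> = (\<Union>x\<in>sdom \<sigma>. vars_t (\<sigma> x))"

definition idempotent :: "('f, 'v) subst \<Rightarrow> bool" where
  "idempotent \<sigma> \<longleftrightarrow> comp_s \<sigma> \<sigma> = \<sigma>"

definition unifier :: "('f, 'v) subst \<Rightarrow> ('p, 'f, 'v) atom \<Rightarrow> ('p, 'f, 'v) atom \<Rightarrow> bool" where
  "unifier \<sigma> a b \<longleftrightarrow> subst_a \<sigma> a = subst_a \<sigma> b"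

definition mgu :: "('f, 'v) subst \<Rightarrow> ('p, 'f, 'v) atom \<Rightarrow> ('p, 'f, 'v) atom \<Rightarrow> bool" where
  "mgu \<theta> a b \<longleftrightarrow> unifier \<theta> a b \<and> (\<forall>\<sigma>. unifier \<sigma> a b \<longrightarrow> (\<exists>\<gamma>. \<sigma> = comp_s \<theta> \<gamma>))"

definition relevant :: "('f, 'v) subst \<Rightarrow> ('p, 'f, 'v) atom \<Rightarrow> ('p, 'f, 'v) atom \<Rightarrow> bool" where
  "relevant \<theta> a b \<longleftrightarrow> sdom \<theta> \<union> srange_vars \<theta> \<subseteq> vars_a a \<union> vars_a b"

definition renaming :: "('f, 'v) subst \<Rightarrow> bool" where
  "renaming \<xi> \<longleftrightarrow> (\<exists>\<pi>. bij \<pi> \<and> \<xi> = (\<lambda>x. Var (\<pi> x)))"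

definition sld_step ::
  "('p, 'f, 'v) goal \<Rightarrow> ('p, 'f, 'v) clause \<Rightarrow> ('f, 'v) subst \<Rightarrow> ('f, 'v) subst
   \<Rightarrow> ('p, 'f, 'v) goal \<Rightarrow> bool" where
  "sld_step G c \<xi> \<theta> G' \<longleftrightarrow> renaming \<xi> \<and>
     (\<exists>i < length G.
        idempotent \<theta> \<and> mgu \<theta> (subst_a \<xi> (fst c)) (G ! i) \<and>
        relevant \<theta> (subst_a \<xi> (fst c)) (G ! i) \<and>
        G' = subst_g \<theta> (take i G @ subst_g \<xi> (snd c) @ drop (Suc i) G))"

definition std_apart ::
  "('p, 'f, 'v) goal \<Rightarrow> (nat \<Rightarrow> ('p, 'f, 'v) clause) \<Rightarrow> (nat \<Rightarrow> ('f, 'v) subst) \<Rightarrow> nat \<Rightarrow> bool" where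
  "std_apart G0 cs \<xi>s j \<longleftrightarrow>
     vars_c (subst_c (\<xi>s j) (cs j)) \<inter>
       (vars_g G0 \<union> (\<Union>k<j. vars_c (subst_c (\<xi>s k) (cs k)))) = {}"

definition inf_sld_derivation ::
  "('p, 'f, 'v) clause set \<Rightarrow> ('p, 'f, 'v) goal \<Rightarrow> (nat \<Rightarrow> ('p, 'f, 'v) goal)
   \<Rightarrow> (nat \<Rightarrow> ('p, 'f, 'v) clause) \<Rightarrow> (nat \<Rightarrow> ('f, 'v) subst) \<Rightarrow> (nat \<Rightarrow> ('f, 'v) subst) \<Rightarrow> bool" where
  "inf_sld_derivation P G0 Gs cs \<xi>s \<theta>s \<longleftrightarrow> Gs 0 = G0 \<and>
     (\<forall>j. cs j \<in> P \<and> sld_step (Gs j) (cs j) (\<xi>s j) (\<theta>s j) (Gs (Suc j)) \<and> std_apart G0 cs \<xi>s j)"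

text \<open>N is a reduced goal of G by tau up to X. The subsequence N is given by
  the set I of kept positions; G - N is the list of the deleted atoms.\<close>
definition reduced ::
  "('p, 'f, 'v) goal \<Rightarrow> ('f, 'v) subst \<Rightarrow> 'v set \<Rightarrow> ('p, 'f, 'v) goal \<Rightarrow> bool" where
  "reduced G \<tau> X N \<longleftrightarrow> (\<exists>I. N = nths G I \<and>
      (\<forall>b\<in>set (nths G (- I)). subst_a \<tau> b \<in> set N) \<and>
      (\<forall>x\<in>vars_g N \<union> X. \<tau> x = Var x))"

text \<open>theta_0 ... theta_(j-1)\<close>
fun comp_upto :: "(nat \<Rightarrow> ('f, 'v) subst) \<Rightarrow> nat \<Rightarrow> ('f, 'v) subst" where
  "comp_upto \<theta>s 0 = Var"
| "comp_upto \<theta>s (Suc j) = comp_s (comp_upto \<theta>s j) (\<theta>s j)"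

definition inf_rsld_derivation ::
  "('p, 'f, 'v) clause set \<Rightarrow> ('p, 'f, 'v) goal \<Rightarrow> (nat \<Rightarrow> ('p, 'f, 'v) goal)
   \<Rightarrow> (nat \<Rightarrow> ('p, 'f, 'v) goal) \<Rightarrow> (nat \<Rightarrow> ('f, 'v) subst)
   \<Rightarrow> (nat \<Rightarrow> ('p, 'f, 'v) clause) \<Rightarrow> (nat \<Rightarrow> ('f, 'v) subst) \<Rightarrow> (nat \<Rightarrow> ('f, 'v) subst) \<Rightarrow> bool" where
  "inf_rsld_derivation P G0 Gs Ns \<alpha>s cs \<xi>s \<theta>s \<longleftrightarrow> Gs 0 = G0 \<and>
     (\<forall>j. reduced (Gs j) (\<alpha>s j) (vars_g (subst_g (comp_upto \<theta>s j) G0)) (Ns j) \<and>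
          cs j \<in> P \<and> sld_step (Ns j) (cs j) (\<xi>s j) (\<theta>s j) (Gs (Suc j)) \<and>
          std_apart G0 cs \<xi>s j)"

end

theory Submission
  imports Defs "HOL-Library.Sublist"
begin

text \<open>Reducing a goal only deletes atoms, so an RSLD derivation is shadowed by an SLD
  derivation that never deletes anything: every resolution step performed on a subsequence
  N of a goal H can be performed on H itself, with the same clause, renaming and mgu, by
  selecting in H the occurrence of the atom selected in N. The resolvent of N is then again
  a subsequence of the resolvent of H. Since clauses and renamings are unchanged,
  standardization apart is inherited, so an infinite RSLD derivation yields an infinite
  SLD derivation.\<close>

lemma subseq_replace_nth:
  assumes "subseq N H" and "i < length N"
  obtains i' where "i' < length H" and "H ! i' = N ! i"
    and "\<And>B. subseq (take i N @ B @ drop (Suc i) N) (take i' H @ B @ drop (Suc i') H)"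
proof -
  have "subseq (take i N @ N ! i # drop (Suc i) N) H"
    using assms by (simp add: id_take_nth_drop[symmetric])
  then obtain us vs where H: "H = us @ vs" and prefix: "subseq (take i N) us"
    and "subseq (N ! i # drop (Suc i) N) vs"
    using list_emb_appendD by blast
  then obtain us' vs' where vs: "vs = us' @ N ! i # vs'"
    and suffix: "subseq (drop (Suc i) N) vs'"
    using list_emb_ConsD by fastforce
  let ?i' = "length (us @ us')"
  have take: "take ?i' H = us @ us'" and drop: "drop (Suc ?i') H = vs'"
    unfolding H vs by simp_all
  have "subseq (take i N) (us @ us')"
    using prefix subseq_rev_drop_many by blast
  then have "subseq (take i N @ B @ drop (Suc i) N) (take ?i' H @ B @ drop (Suc ?i') H)" for B
    unfolding take drop using suffix by (intro list_emb_append_mono) auto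
  moreover have "?i' < length H" "H ! ?i' = N ! i"
    unfolding H vs by simp_all
  ultimately show thesis
    using that by blast
qed

lemma sld_step_subseq_lift:
  assumes "subseq N H" and "sld_step N c \<xi> \<theta> N'"
  obtains H' where "sld_step H c \<xi> \<theta> H'" and "subseq N' H'"
proof -
  from assms(2) obtain i where "renaming \<xi>" "i < length N" "idempotent \<theta>"
    "mgu \<theta> (subst_a \<xi> (fst c)) (N ! i)" "relevant \<theta> (subst_a \<xi> (fst c)) (N ! i)"
    and N': "N' = subst_g \<theta> (take i N @ subst_g \<xi> (snd c) @ drop (Suc i) N)"
    unfolding sld_step_def by blast
  moreover obtain i' where "i' < length H" "H ! i' = N ! i"
    and shadow: "\<And>B. subseq (take i N @ B @ drop (Suc i) N) (take i' H @ B @ drop (Suc i') H)"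
    using subseq_replace_nth[OF assms(1) \<open>i < length N\<close>] by blast
  moreover have "subseq N' (subst_g \<theta> (take i' H @ subst_g \<xi> (snd c) @ drop (Suc i') H))"
    unfolding N' subst_g_def by (rule subseq_map[OF shadow])
  ultimately show thesis
    by (intro that) (auto simp: sld_step_def)
qed

lemma reduced_imp_subseq: "reduced G \<tau> X N \<Longrightarrow> subseq N G"
  unfolding reduced_def using subseq_conv_nths by blast

lemma sld_chain_of_subseq_chain:
  assumes "\<And>j. subseq (Ns j) (Gs j)"
    and "\<And>j. sld_step (Ns j) (cs j) (\<xi>s j) (\<theta>s j) (Gs (Suc j))"
  obtains Hs where "Hs 0 = Gs 0" and "\<And>j. sld_step (Hs j) (cs j) (\<xi>s j) (\<theta>s j) (Hs (Suc j))"
proof -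
  have "\<forall>j H. \<exists>H'. subseq (Ns j) H \<longrightarrow>
      sld_step H (cs j) (\<xi>s j) (\<theta>s j) H' \<and> subseq (Gs (Suc j)) H'"
    using sld_step_subseq_lift[OF _ assms(2)] by metis
  then obtain lift where lift: "\<And>j H. subseq (Ns j) H \<Longrightarrow>
      sld_step H (cs j) (\<xi>s j) (\<theta>s j) (lift j H) \<and> subseq (Gs (Suc j)) (lift j H)"
    by metis
  define Hs where "Hs = rec_nat (Gs 0) lift"
  have Hs_Suc: "Hs (Suc j) = lift j (Hs j)" for j
    unfolding Hs_def by simp
  have shadow: "subseq (Gs j) (Hs j)" for j
  proof (induction j)
    case 0
    show ?case unfolding Hs_def by simp
  next
    case (Suc j)
    then show ?case
      using lift assms(1) subseq_order.order_trans Hs_Suc by metis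
  qed
  show thesis
  proof (rule that)
    show "Hs 0 = Gs 0" unfolding Hs_def by simp
    show "sld_step (Hs j) (cs j) (\<xi>s j) (\<theta>s j) (Hs (Suc j))" for j
      using lift assms(1) shadow subseq_order.order_trans Hs_Suc by metis
  qed
qed

theorem theoremt1p1p1:
  fixes P :: "('p, 'f, 'v) clause set" and G :: "('p, 'f, 'v) goal"
  assumes "finite P"
    and "infinite (UNIV :: 'v set)"
    and "\<not> (\<exists>Gs cs \<xi>s \<theta>s. inf_sld_derivation P G Gs cs \<xi>s \<theta>s)"
  shows "\<not> (\<exists>Gs Ns \<alpha>s cs \<xi>s \<theta>s. inf_rsld_derivation P G Gs Ns \<alpha>s cs \<xi>s \<theta>s)"
proof
  assume "\<exists>Gs Ns \<alpha>s cs \<xi>s \<theta>s. inf_rsld_derivation P G Gs Ns \<alpha>s cs \<xi>s \<theta>s"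
  then obtain Gs Ns \<alpha>s cs \<xi>s \<theta>s where "Gs 0 = G"
    and reduced: "\<And>j. reduced (Gs j) (\<alpha>s j) (vars_g (subst_g (comp_upto \<theta>s j) G)) (Ns j)"
    and steps: "\<And>j. cs j \<in> P \<and> sld_step (Ns j) (cs j) (\<xi>s j) (\<theta>s j) (Gs (Suc j)) \<and>
                     std_apart G cs \<xi>s j"
    unfolding inf_rsld_derivation_def by blast
  have "\<And>j. sld_step (Ns j) (cs j) (\<xi>s j) (\<theta>s j) (Gs (Suc j))"
    using steps by blast
  then obtain Hs where "Hs 0 = Gs 0" and "\<And>j. sld_step (Hs j) (cs j) (\<xi>s j) (\<theta>s j) (Hs (Suc j))"
    by (rule sld_chain_of_subseq_chain[OF reduced_imp_subseq[OF reduced]]) blast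
  then have "inf_sld_derivation P G Hs cs \<xi>s \<theta>s"
    unfolding inf_sld_derivation_def using steps \<open>Gs 0 = G\<close> by simp
  then show False
    using assms(3) by blast
qed

end
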